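(* Let $d\ge1$, let $x_0\neq x_1\in\mathbb{R}^d$ have the same Euclidean norm $\|x\|_2$, and let $\rho=\langle x_0,x_1\rangle/\|x\|_2^2$ with $|\rho|<1$. Let $n_0,\dots,n_{M-1}$ be i.i.d. $\mathcal{N}(0,I_{d\times d})$, and let $\hat{x}_0,\hat{x}_1$ be the output of the hard-assignment algorithm with templates $x_0,x_1$. Then, almost surely as $M\to\infty$, $\hat{x}_0\to\sqrt{\frac{1}{\pi(1-\rho)\|x\|_2^2}}\,(x_0-x_1)$ and $\hat{x}_1\to\sqrt{\frac{1}{\pi(1-\rho)\|x\|_2^2}}\,(x_1-x_0)$.
   Context: Hard-assignment algorithm: for each $i$ let $\hat{R}_i=\arg\max_{\ell\in\{0,1\}}\langle n_i,x_\ell\rangle$, $\mathcal{A}_\ell=\{n_i:\hat{R}_i=\ell\}$, and $\hat{x}_\ell=\frac{1}{|\mathcal{A}_\ell|}\sum_{n_i\in\mathcal{A}_\ell}n_i$. *)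

theory Defs
  imports "HOL-Probability.Probability"
begin

definition std_normal_vec :: "'a::euclidean_space measure" where
  "std_normal_vec = density lborel
     (\<lambda>x. ennreal ((2 * pi) powr (- real DIM('a) / 2) * exp (- (norm x)\<^sup>2 / 2)))"

definition hard_assign :: "'a::real_inner \<Rightarrow> 'a \<Rightarrow> 'a \<Rightarrow> nat" where
  "hard_assign x0 x1 n = (if inner n x1 \<le> inner n x0 then 0 else 1)"

definition hard_cluster :: "'a::real_inner \<Rightarrow> 'a \<Rightarrow> (nat \<Rightarrow> 'a) \<Rightarrow> nat \<Rightarrow> nat \<Rightarrow> nat set" where
  "hard_cluster x0 x1 ns m l = {i \<in> {..<m}. hard_assign x0 x1 (ns i) = l}"

definition hard_estimate :: "'a::real_inner \<Rightarrow> 'a \<Rightarrow> (nat \<Rightarrow> 'a) \<Rightarrow> nat \<Rightarrow> nat \<Rightarrow> 'a" where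
  "hard_estimate x0 x1 ns m l =
     (1 / real (card (hard_cluster x0 x1 ns m l))) *\<^sub>R (\<Sum>i\<in>hard_cluster x0 x1 ns m l. ns i)"

end

(*
  Write v = x0 - x1. Template x0 wins exactly on the half-space {n. 0 <= n . v} (ties go to
  cluster 0), so by the strong law of large numbers the fraction of samples in cluster 0 tends to
  P(n . v >= 0) = 1/2, and the normalised cluster sum tends to E[n; n . v >= 0], whose component
  along c is (v . c) / (sqrt (2 pi) |v|). This first moment comes from differentiating
  E|n . w| = sqrt (2/pi) |w| with respect to w, which only needs the one-dimensional law
  N(0, |w|^2) of n . w. Hence cluster 0 converges to 2 v / (sqrt (2 pi) |v|), cluster 1 (the
  complementary half-space) to the opposite vector, and |v|^2 = 2 (1 - rho) |x|^2 gives the stated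
  constant. The strong law is proved in its fourth-moment form: E (S_m)^4 = O(m^2), Markov's
  inequality and Borel-Cantelli.
*)

theory Submission
  imports Defs
begin

section \<open>Strong law of large numbers under a finite fourth moment\<close>

context prob_space
begin

lemma integrable_power_le_even:
  fixes X :: "'a \<Rightarrow> real"
  assumes [measurable]: "X \<in> borel_measurable M" and int: "integrable M (\<lambda>\<omega>. X \<omega> ^ n)"
    and "even n" and "k \<le> n"
  shows "integrable M (\<lambda>\<omega>. X \<omega> ^ k)"
proof (rule Bochner_Integration.integrable_bound)
  show "integrable M (\<lambda>\<omega>. 1 + X \<omega> ^ n)"
    using int by simp
  have "norm (x ^ k) \<le> norm (1 + x ^ n)" for x :: real
  proof -
    have "\<bar>x\<bar> ^ k \<le> 1 + \<bar>x\<bar> ^ n"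
    proof (cases "\<bar>x\<bar> \<le> 1")
      case True
      then show ?thesis by (simp add: add_increasing2 power_le_one)
    next
      case False
      then have "\<bar>x\<bar> ^ k \<le> \<bar>x\<bar> ^ n"
        by (intro power_increasing \<open>k \<le> n\<close>) simp
      then show ?thesis by simp
    qed
    moreover have "x ^ n = \<bar>x\<bar> ^ n"
      using \<open>even n\<close> by (simp add: power_even_abs)
    ultimately show ?thesis
      by (simp add: power_abs)
  qed
  then show "AE \<omega> in M. norm (X \<omega> ^ k) \<le> norm (1 + X \<omega> ^ n)"
    by simp
qed simp

lemma integrable_fourth_power_diff:
  fixes X :: "'a \<Rightarrow> real"
  assumes [measurable]: "X \<in> borel_measurable M" and X4: "integrable M (\<lambda>\<omega>. X \<omega> ^ 4)"
  shows "integrable M (\<lambda>\<omega>. (X \<omega> - c) ^ 4)"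
proof -
  have "(\<lambda>\<omega>. (X \<omega> - c) ^ 4) =
      (\<lambda>\<omega>. X \<omega> ^ 4 - 4 * c * X \<omega> ^ 3 + 6 * c\<^sup>2 * X \<omega> ^ 2 - 4 * c ^ 3 * X \<omega> ^ 1 + c ^ 4)"
    by (simp add: power2_eq_square power3_eq_cube power4_eq_xxxx algebra_simps)
  then show ?thesis
    using integrable_power_le_even[OF _ X4, of 3] integrable_power_le_even[OF _ X4, of 2]
      integrable_power_le_even[OF _ X4, of 1] X4
    by simp
qed

lemma indep_var_zero_mean_add_moments:
  fixes X Y :: "'a \<Rightarrow> real"
  assumes indep: "indep_var borel X borel Y"
    and X4: "integrable M (\<lambda>\<omega>. X \<omega> ^ 4)" and Y4: "integrable M (\<lambda>\<omega>. Y \<omega> ^ 4)"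
    and EX: "expectation X = 0" and EY: "expectation Y = 0"
  shows "integrable M (\<lambda>\<omega>. (X \<omega> + Y \<omega>) ^ 4)"
    and "expectation (\<lambda>\<omega>. (X \<omega> + Y \<omega>) ^ 2) =
      expectation (\<lambda>\<omega>. X \<omega> ^ 2) + expectation (\<lambda>\<omega>. Y \<omega> ^ 2)"
    and "expectation (\<lambda>\<omega>. (X \<omega> + Y \<omega>) ^ 4) = expectation (\<lambda>\<omega>. X \<omega> ^ 4)
      + 6 * expectation (\<lambda>\<omega>. X \<omega> ^ 2) * expectation (\<lambda>\<omega>. Y \<omega> ^ 2) + expectation (\<lambda>\<omega>. Y \<omega> ^ 4)"
proof -
  have [measurable]: "X \<in> borel_measurable M" "Y \<in> borel_measurable M"
    using indep_var_rv1[OF indep] indep_var_rv2[OF indep] by auto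
  have int_X: "integrable M (\<lambda>\<omega>. X \<omega> ^ j)" and int_Y: "integrable M (\<lambda>\<omega>. Y \<omega> ^ k)"
    if "j \<le> 4" "k \<le> 4" for j k
    using integrable_power_le_even[OF _ X4] integrable_power_le_even[OF _ Y4] that by auto
  have indep_pow: "indep_var borel (\<lambda>\<omega>. X \<omega> ^ j) borel (\<lambda>\<omega>. Y \<omega> ^ k)" for j k
    using indep_var_compose[OF indep, of "\<lambda>x. x ^ j" borel "\<lambda>y. y ^ k" borel]
    by (simp add: comp_def)
  have prod: "integrable M (\<lambda>\<omega>. X \<omega> ^ j * Y \<omega> ^ k)"
    "expectation (\<lambda>\<omega>. X \<omega> ^ j * Y \<omega> ^ k) =
       expectation (\<lambda>\<omega>. X \<omega> ^ j) * expectation (\<lambda>\<omega>. Y \<omega> ^ k)"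
    if "j \<le> 4" "k \<le> 4" for j k
    using indep_var_integrable[OF indep_pow int_X int_Y] indep_var_lebesgue_integral[OF indep_pow int_X int_Y]
      that by auto
  note terms = prod[of 4 0] prod[of 3 1] prod[of 2 2] prod[of 1 3] prod[of 0 4]
    prod[of 2 0] prod[of 1 1] prod[of 0 2]
  have expand4: "(X \<omega> + Y \<omega>) ^ 4 = X \<omega> ^ 4 * Y \<omega> ^ 0 + 4 * (X \<omega> ^ 3 * Y \<omega> ^ 1)
      + 6 * (X \<omega> ^ 2 * Y \<omega> ^ 2) + 4 * (X \<omega> ^ 1 * Y \<omega> ^ 3) + X \<omega> ^ 0 * Y \<omega> ^ 4" for \<omega>
    by (simp add: power2_eq_square power3_eq_cube power4_eq_xxxx algebra_simps)
  have expand2: "(X \<omega> + Y \<omega>) ^ 2 = X \<omega> ^ 2 * Y \<omega> ^ 0 + 2 * (X \<omega> ^ 1 * Y \<omega> ^ 1)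
      + X \<omega> ^ 0 * Y \<omega> ^ 2" for \<omega>
    by (simp add: power2_eq_square algebra_simps)
  show "integrable M (\<lambda>\<omega>. (X \<omega> + Y \<omega>) ^ 4)"
    unfolding expand4 using terms by simp
  show "expectation (\<lambda>\<omega>. (X \<omega> + Y \<omega>) ^ 2) =
      expectation (\<lambda>\<omega>. X \<omega> ^ 2) + expectation (\<lambda>\<omega>. Y \<omega> ^ 2)"
    unfolding expand2 using terms EX EY by simp
  show "expectation (\<lambda>\<omega>. (X \<omega> + Y \<omega>) ^ 4) = expectation (\<lambda>\<omega>. X \<omega> ^ 4)
      + 6 * expectation (\<lambda>\<omega>. X \<omega> ^ 2) * expectation (\<lambda>\<omega>. Y \<omega> ^ 2) + expectation (\<lambda>\<omega>. Y \<omega> ^ 4)"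
    unfolding expand4 using terms EX EY by simp
qed

lemma indep_zero_mean_sum_moments:
  fixes Y :: "nat \<Rightarrow> 'a \<Rightarrow> real"
  assumes indep: "indep_vars (\<lambda>_. borel) Y UNIV"
    and int4: "\<And>i. integrable M (\<lambda>\<omega>. Y i \<omega> ^ 4)"
    and mean: "\<And>i. expectation (Y i) = 0"
    and var: "\<And>i. expectation (\<lambda>\<omega>. Y i \<omega> ^ 2) = \<sigma>\<^sub>2"
    and fourth: "\<And>i. expectation (\<lambda>\<omega>. Y i \<omega> ^ 4) \<le> \<mu>\<^sub>4"
  shows "integrable M (\<lambda>\<omega>. (\<Sum>i<m. Y i \<omega>) ^ 4) \<and>
    expectation (\<lambda>\<omega>. \<Sum>i<m. Y i \<omega>) = 0 \<and>
    expectation (\<lambda>\<omega>. (\<Sum>i<m. Y i \<omega>) ^ 2) = m * \<sigma>\<^sub>2 \<and>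
    expectation (\<lambda>\<omega>. (\<Sum>i<m. Y i \<omega>) ^ 4) \<le> m * \<mu>\<^sub>4 + 3 * m\<^sup>2 * \<sigma>\<^sub>2\<^sup>2"
proof (induction m)
  case 0
  then show ?case by simp
next
  case (Suc m)
  have [measurable]: "Y i \<in> borel_measurable M" for i
    using indep by (auto simp: indep_vars_def)
  define S where "S = (\<lambda>\<omega>. \<Sum>i<m. Y i \<omega>)"
  have "indep_var borel (Y m) borel S"
    unfolding S_def by (rule indep_vars_sum) (auto intro: indep_vars_subset[OF indep])
  note add_moments = indep_var_zero_mean_add_moments[OF this int4 _ mean]
  have sum_Suc: "(\<lambda>\<omega>. \<Sum>i<Suc m. Y i \<omega>) = (\<lambda>\<omega>. Y m \<omega> + S \<omega>)"
    by (simp add: S_def add.commute)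
  have "0 \<le> \<sigma>\<^sub>2"
    using var[of 0] by (metis integral_nonneg_AE AE_I2 zero_le_power2)
  then have "m * \<mu>\<^sub>4 + 3 * m\<^sup>2 * \<sigma>\<^sub>2\<^sup>2 + 6 * (m * \<sigma>\<^sub>2) * \<sigma>\<^sub>2 + \<mu>\<^sub>4
      \<le> Suc m * \<mu>\<^sub>4 + 3 * (Suc m)\<^sup>2 * \<sigma>\<^sub>2\<^sup>2"
    by (simp add: power2_eq_square algebra_simps)
  moreover have "integrable M (Y m)" "integrable M S"
    using integrable_power_le_even[OF _ int4, of m 1]
      integrable_power_le_even[of S 4 1] Suc.IH by (simp_all add: S_def)
  ultimately show ?case
    using Suc.IH add_moments fourth[of m] var[of m] mean[of m]
    unfolding sum_Suc by (simp add: S_def algebra_simps)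
qed

lemma AE_eventually_abs_less_of_fourth_moment:
  fixes Z :: "nat \<Rightarrow> 'a \<Rightarrow> real"
  assumes [measurable]: "\<And>m. Z m \<in> borel_measurable M"
    and int4: "\<And>m. integrable M (\<lambda>\<omega>. Z m \<omega> ^ 4)"
    and bound: "\<And>m. expectation (\<lambda>\<omega>. Z m \<omega> ^ 4) \<le> K * (real m)\<^sup>2"
    and "0 < e"
  shows "AE \<omega> in M. eventually (\<lambda>m. \<bar>Z m \<omega>\<bar> < real m * e) sequentially"
proof -
  define A where "A m = {\<omega>\<in>space M. (real m * e) ^ 4 \<le> Z m \<omega> ^ 4}" for m
  have [measurable]: "A m \<in> sets M" for m
    unfolding A_def by measurable
  have measure_A: "measure M (A m) \<le> K / e ^ 4 * inverse ((real m)\<^sup>2)" if "0 < m" for m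
  proof -
    have pos: "0 < (real m * e) ^ 4"
      using that \<open>0 < e\<close> by simp
    have "measure M (A m) \<le> expectation (\<lambda>\<omega>. Z m \<omega> ^ 4) / (real m * e) ^ 4"
      unfolding A_def by (rule integral_Markov_inequality_measure[OF int4 _ _ pos]) auto
    also have "\<dots> \<le> K * (real m)\<^sup>2 / (real m * e) ^ 4"
      using bound pos by (intro divide_right_mono) auto
    also have "\<dots> = K / e ^ 4 * inverse ((real m)\<^sup>2)"
      using that \<open>0 < e\<close> by (simp add: field_simps power2_eq_square power4_eq_xxxx)
    finally show ?thesis .
  qed
  have "eventually (\<lambda>m. norm (measure M (A m)) \<le> K / e ^ 4 * inverse ((real m)\<^sup>2)) sequentially"
    using eventually_gt_at_top[of 0] by eventually_elim (use measure_A in auto)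
  then have "summable (\<lambda>m. measure M (A m))"
    by (rule summable_comparison_test_ev) (intro summable_mult inverse_power_summable; simp)
  then have "AE \<omega> in M. eventually (\<lambda>m. \<omega> \<in> space M - A m) sequentially"
    by (intro borel_cantelli_AE1) (auto simp: emeasure_eq_measure)
  then show ?thesis
  proof (rule AE_mp, intro AE_I2 impI)
    fix \<omega> assume "\<omega> \<in> space M" and "eventually (\<lambda>m. \<omega> \<in> space M - A m) sequentially"
    from this(2) show "eventually (\<lambda>m. \<bar>Z m \<omega>\<bar> < real m * e) sequentially"
    proof eventually_elim
      case (elim m)
      then have "\<bar>Z m \<omega>\<bar> ^ 4 < (real m * e) ^ 4"
        by (auto simp: A_def power_even_abs)
      then show ?case
        using \<open>0 < e\<close> power_less_imp_less_base[of "\<bar>Z m \<omega>\<bar>" 4 "real m * e"] by simp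
    qed
  qed
qed

lemma AE_tendsto_zero_of_fourth_moment:
  fixes Z :: "nat \<Rightarrow> 'a \<Rightarrow> real"
  assumes "\<And>m. Z m \<in> borel_measurable M"
    and "\<And>m. integrable M (\<lambda>\<omega>. Z m \<omega> ^ 4)"
    and "\<And>m. expectation (\<lambda>\<omega>. Z m \<omega> ^ 4) \<le> K * (real m)\<^sup>2"
  shows "AE \<omega> in M. (\<lambda>m. Z m \<omega> / real m) \<longlonglongrightarrow> 0"
proof -
  have "AE \<omega> in M. \<forall>k. eventually (\<lambda>m. \<bar>Z m \<omega>\<bar> < real m * inverse (Suc k)) sequentially"
    unfolding AE_all_countable
    by (intro allI AE_eventually_abs_less_of_fourth_moment[OF assms]) simp
  then show ?thesis
  proof (rule AE_mp, intro AE_I2 impI)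
    fix \<omega> assume small: "\<forall>k. eventually (\<lambda>m. \<bar>Z m \<omega>\<bar> < real m * inverse (Suc k)) sequentially"
    show "(\<lambda>m. Z m \<omega> / real m) \<longlonglongrightarrow> 0"
    proof (rule tendstoI)
      fix r :: real assume "0 < r"
      then obtain k where k: "inverse (Suc k) < r"
        using reals_Archimedean by blast
      show "eventually (\<lambda>m. dist (Z m \<omega> / real m) 0 < r) sequentially"
        using small[rule_format, of k] eventually_gt_at_top[of 0]
      proof eventually_elim
        case (elim m)
        have "\<bar>Z m \<omega>\<bar> < real m * r"
          using elim(1) mult_strict_left_mono[OF k, of "real m"] elim(2) by linarith
        then show ?case
          using elim(2) by (simp add: dist_real_def abs_divide field_simps)
      qed
    qed
  qed
qed

lemma strong_law_zero_mean_fourth_moment: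
  fixes Y :: "nat \<Rightarrow> 'a \<Rightarrow> real"
  assumes indep: "indep_vars (\<lambda>_. borel) Y UNIV"
    and int4: "\<And>i. integrable M (\<lambda>\<omega>. Y i \<omega> ^ 4)"
    and mean: "\<And>i. expectation (Y i) = 0"
    and var: "\<And>i. expectation (\<lambda>\<omega>. Y i \<omega> ^ 2) = \<sigma>\<^sub>2"
    and fourth: "\<And>i. expectation (\<lambda>\<omega>. Y i \<omega> ^ 4) \<le> \<mu>\<^sub>4"
  shows "AE \<omega> in M. (\<lambda>m. (\<Sum>i<m. Y i \<omega>) / real m) \<longlonglongrightarrow> 0"
proof (rule AE_tendsto_zero_of_fourth_moment)
  have [measurable]: "Y i \<in> borel_measurable M" for i
    using indep by (auto simp: indep_vars_def)
  show "(\<lambda>\<omega>. \<Sum>i<m. Y i \<omega>) \<in> borel_measurable M" for m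
    by measurable
  note moments = indep_zero_mean_sum_moments[OF indep int4 mean var fourth]
  show "integrable M (\<lambda>\<omega>. (\<Sum>i<m. Y i \<omega>) ^ 4)" for m
    using moments by blast
  have "0 \<le> expectation (\<lambda>\<omega>. Y 0 \<omega> ^ 4)"
    by (intro integral_nonneg_AE AE_I2) simp
  then have "0 \<le> \<mu>\<^sub>4"
    using fourth[of 0] by linarith
  then have "m * \<mu>\<^sub>4 + 3 * m\<^sup>2 * \<sigma>\<^sub>2\<^sup>2 \<le> (\<mu>\<^sub>4 + 3 * \<sigma>\<^sub>2\<^sup>2) * (real m)\<^sup>2" for m
    by (cases m) (auto simp: power2_eq_square algebra_simps intro!: mult_left_mono)
  then show "expectation (\<lambda>\<omega>. (\<Sum>i<m. Y i \<omega>) ^ 4) \<le> (\<mu>\<^sub>4 + 3 * \<sigma>\<^sub>2\<^sup>2) * (real m)\<^sup>2" for m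
    using moments[of m] by (blast intro: order_trans)
qed

theorem strong_law_of_large_numbers_fourth_moment:
  fixes N :: "nat \<Rightarrow> 'a \<Rightarrow> 'b::topological_space" and g :: "'b \<Rightarrow> real"
  assumes indep: "indep_vars (\<lambda>_. borel) N UNIV"
    and law: "\<And>i. distr M borel (N i) = D"
    and [measurable]: "g \<in> borel_measurable borel"
    and g4: "integrable D (\<lambda>x. g x ^ 4)"
  shows "AE \<omega> in M. (\<lambda>m. (\<Sum>i<m. g (N i \<omega>)) / real m) \<longlonglongrightarrow> integral\<^sup>L D g"
proof -
  have [measurable]: "N i \<in> borel_measurable M" for i
    using indep by (auto simp: indep_vars_def)
  interpret D: prob_space D
    using prob_space_distr[of "N 0" borel] law[of 0] by simp
  have sets_D [measurable_cong]: "sets D = sets borel"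
    using sets_distr[of M borel "N 0"] law[of 0] by simp
  define \<mu> where "\<mu> = integral\<^sup>L D g"
  define Y where "Y i \<omega> = g (N i \<omega>) - \<mu>" for i \<omega>
  have [measurable]: "Y i \<in> borel_measurable M" for i
    unfolding Y_def by measurable
  have transfer: "integrable M (\<lambda>\<omega>. h (Y i \<omega>)) \<longleftrightarrow> integrable D (\<lambda>x. h (g x - \<mu>))"
    "expectation (\<lambda>\<omega>. h (Y i \<omega>)) = integral\<^sup>L D (\<lambda>x. h (g x - \<mu>))"
    if [measurable]: "h \<in> borel_measurable borel" for h :: "real \<Rightarrow> real" and i
    using integrable_distr_eq[of "N i" M borel "\<lambda>x. h (g x - \<mu>)"]
      integral_distr[of "N i" M borel "\<lambda>x. h (g x - \<mu>)"] law[of i]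
    by (simp_all add: Y_def)
  have "indep_vars (\<lambda>_. borel) Y UNIV"
    unfolding Y_def by (rule indep_vars_compose2[OF indep]) simp
  moreover have "integrable M (\<lambda>\<omega>. Y i \<omega> ^ 4)" for i
    using transfer(1)[of "\<lambda>y. y ^ 4"] D.integrable_fourth_power_diff[OF _ g4] by simp
  moreover have "expectation (Y i) = 0" for i
    using transfer(2)[of "\<lambda>y. y"] D.integrable_power_le_even[OF _ g4, of 1]
    by (simp add: \<mu>_def D.prob_space)
  ultimately have "AE \<omega> in M. (\<lambda>m. (\<Sum>i<m. Y i \<omega>) / real m) \<longlonglongrightarrow> 0"
    using transfer(2)[of "\<lambda>y. y ^ 2"] transfer(2)[of "\<lambda>y. y ^ 4"]
    by (intro strong_law_zero_mean_fourth_moment) auto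
  then show ?thesis
  proof (rule AE_mp, intro AE_I2 impI)
    fix \<omega> assume "(\<lambda>m. (\<Sum>i<m. Y i \<omega>) / real m) \<longlonglongrightarrow> 0"
    then have "(\<lambda>m. (\<Sum>i<m. Y i \<omega>) / real m + \<mu>) \<longlonglongrightarrow> \<mu>"
      using tendsto_add[OF _ tendsto_const, of _ 0 sequentially \<mu>] by simp
    moreover have "eventually (\<lambda>m. (\<Sum>i<m. Y i \<omega>) / real m + \<mu> = (\<Sum>i<m. g (N i \<omega>)) / real m)
        sequentially"
      using eventually_gt_at_top[of 0]
      by eventually_elim (simp add: Y_def sum_subtractf field_simps)
    ultimately show "(\<lambda>m. (\<Sum>i<m. g (N i \<omega>)) / real m) \<longlonglongrightarrow> integral\<^sup>L D g"
      unfolding \<mu>_def by (rule Lim_transform_eventually)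
  qed
qed

end

section \<open>The standard Gaussian vector\<close>

lemma PiM_density:
  assumes "finite I"
    and [measurable]: "\<And>i. i \<in> I \<Longrightarrow> f i \<in> borel_measurable (M i)"
    and "\<And>i. sigma_finite_measure (M i)" and "\<And>i. sigma_finite_measure (density (M i) (f i))"
  shows "(\<Pi>\<^sub>M i\<in>I. density (M i) (f i)) = density (\<Pi>\<^sub>M i\<in>I. M i) (\<lambda>x. \<Prod>i\<in>I. f i (x i))"
proof -
  interpret M: product_sigma_finite M
    using assms(3) by (simp add: product_sigma_finite_def)
  interpret D: product_sigma_finite "\<lambda>i. density (M i) (f i)"
    using assms(4) by (simp add: product_sigma_finite_def)
  show ?thesis
  proof (rule D.PiM_eqI[symmetric, OF \<open>finite I\<close>])
    fix A assume A: "\<And>i. i \<in> I \<Longrightarrow> A i \<in> sets (density (M i) (f i))"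
    then have [measurable]: "Pi\<^sub>E I A \<in> sets (\<Pi>\<^sub>M i\<in>I. M i)"
      by (intro sets_PiM_I_finite \<open>finite I\<close>) auto
    have "emeasure (density (\<Pi>\<^sub>M i\<in>I. M i) (\<lambda>x. \<Prod>i\<in>I. f i (x i))) (Pi\<^sub>E I A)
        = (\<integral>\<^sup>+ x. (\<Prod>i\<in>I. f i (x i) * indicator (A i) (x i)) \<partial>(\<Pi>\<^sub>M i\<in>I. M i))"
      by (subst emeasure_density)
        (auto intro!: nn_integral_cong simp: space_PiM PiE_iff indicator_def prod.distrib
          \<open>finite I\<close> prod.neutral)
    also have "\<dots> = (\<Prod>i\<in>I. emeasure (density (M i) (f i)) (A i))"
      using A by (subst M.product_nn_integral_prod[OF \<open>finite I\<close>]) (auto simp: emeasure_density)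
    finally show "emeasure (density (\<Pi>\<^sub>M i\<in>I. M i) (\<lambda>x. \<Prod>i\<in>I. f i (x i))) (Pi\<^sub>E I A)
        = (\<Prod>i\<in>I. emeasure (density (M i) (f i)) (A i))" .
  qed (simp cong: sets_PiM_cong)
qed

lemma indep_vars_PiM_coordinates:
  assumes "I \<noteq> {}" and M: "\<And>i. i \<in> I \<Longrightarrow> prob_space (M i)"
  shows "prob_space.indep_vars (\<Pi>\<^sub>M i\<in>I. M i) M (\<lambda>i x. x i) I"
proof -
  interpret P: prob_space "\<Pi>\<^sub>M i\<in>I. M i"
    using M by (rule prob_space_PiM)
  have "distr (\<Pi>\<^sub>M i\<in>I. M i) (\<Pi>\<^sub>M i\<in>I. M i) (\<lambda>x. \<lambda>i\<in>I. x i) = (\<Pi>\<^sub>M i\<in>I. M i)"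
    by (subst distr_cong[where g="\<lambda>x. x"]) (auto simp: space_PiM PiE_def extensional_restrict)
  also have "\<dots> = (\<Pi>\<^sub>M i\<in>I. distr (\<Pi>\<^sub>M i\<in>I. M i) (M i) (\<lambda>x. x i))"
    using M by (intro PiM_cong refl) (simp add: distr_PiM_component)
  finally show ?thesis
    using \<open>I \<noteq> {}\<close> by (subst P.indep_vars_iff_distr_eq_PiM') auto
qed

lemma norm_sum_Basis_scaleR_squared:
  "(norm (\<Sum>b\<in>Basis. x b *\<^sub>R b :: 'a::euclidean_space))\<^sup>2 = (\<Sum>b\<in>Basis. (x b)\<^sup>2)"
  unfolding power2_norm_eq_inner euclidean_inner[where y="\<Sum>b\<in>Basis. x b *\<^sub>R b"]
  by (simp add: inner_sum_left_Basis power2_eq_square)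

lemma std_normal_vec_eq_distr_PiM:
  "(std_normal_vec :: 'a::euclidean_space measure) =
     distr (\<Pi>\<^sub>M b\<in>Basis. std_normal_distribution) borel (\<lambda>x. \<Sum>b\<in>Basis. x b *\<^sub>R b)"
proof -
  let ?\<Phi> = "\<lambda>x. \<Sum>b\<in>(Basis::'a set). x b *\<^sub>R b"
  let ?g = "\<lambda>y::'a. ennreal ((2 * pi) powr (- real DIM('a) / 2) * exp (- (norm y)\<^sup>2 / 2))"
  have [measurable]: "?\<Phi> \<in> borel_measurable (\<Pi>\<^sub>M b\<in>Basis. lborel)"
    by measurable
  have "(2 * pi) powr (- real DIM('a) / 2) = ((2 * pi) powr (- 1 / 2)) powr real DIM('a)"
    by (simp add: powr_powr)
  also have "\<dots> = (1 / sqrt (2 * pi)) ^ DIM('a)"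
    by (simp add: powr_realpow powr_minus_divide powr_half_sqrt)
  finally have normalization: "(2 * pi) powr (- real DIM('a) / 2) = (1 / sqrt (2 * pi)) ^ DIM('a)" .
  have density_prod: "?g (?\<Phi> x) = (\<Prod>b\<in>Basis. ennreal (std_normal_density (x b)))" for x
  proof -
    have "exp (- (norm (?\<Phi> x))\<^sup>2 / 2) = (\<Prod>b\<in>Basis. exp (- (x b)\<^sup>2 / 2))"
      unfolding norm_sum_Basis_scaleR_squared
      by (simp add: exp_sum[symmetric] sum_divide_distrib[symmetric] sum_negf)
    moreover have "(\<Prod>b\<in>Basis. std_normal_density (x b))
        = (1 / sqrt (2 * pi)) ^ DIM('a) * (\<Prod>b\<in>(Basis::'a set). exp (- (x b)\<^sup>2 / 2))"
      unfolding std_normal_density_def prod.distrib by simp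
    ultimately show ?thesis
      unfolding normalization by (subst prod_ennreal) auto
  qed
  have "(std_normal_vec :: 'a measure) = density (distr (\<Pi>\<^sub>M b\<in>Basis. lborel) borel ?\<Phi>) ?g"
    unfolding std_normal_vec_def by (subst lborel_eq) (rule refl)
  also have "\<dots> = distr (density (\<Pi>\<^sub>M b\<in>Basis. lborel) (\<lambda>x. ?g (?\<Phi> x))) borel ?\<Phi>"
    by (rule density_distr) measurable
  also have "density (\<Pi>\<^sub>M b\<in>Basis. lborel) (\<lambda>x. ?g (?\<Phi> x)) = (\<Pi>\<^sub>M b\<in>Basis. std_normal_distribution)"
    unfolding density_prod
    using PiM_density[of Basis "\<lambda>_ y. ennreal (std_normal_density y)" "\<lambda>_. lborel", symmetric]
      real_dist_normal_dist
    by (simp add: sigma_finite_lborel prob_space_imp_sigma_finite real_distribution_def)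
  finally show ?thesis .
qed

lemma prob_space_std_normal_vec: "prob_space (std_normal_vec :: 'a::euclidean_space measure)"
  unfolding std_normal_vec_eq_distr_PiM
  by (intro prob_space.prob_space_distr prob_space_PiM real_distribution.axioms real_dist_normal_dist)
    measurable

lemma sets_std_normal_vec [simp, measurable_cong]: "sets std_normal_vec = sets borel"
  by (simp add: std_normal_vec_def)

lemma space_std_normal_vec [simp]: "space std_normal_vec = UNIV"
  by (simp add: std_normal_vec_def)

lemma distributed_inner_std_normal_vec:
  fixes w :: "'a::euclidean_space"
  assumes "w \<noteq> 0"
  shows "distributed std_normal_vec lborel (\<lambda>n. n \<bullet> w) (normal_density 0 (norm w))"
proof -
  define Q where "Q = (\<Pi>\<^sub>M b\<in>(Basis::'a set). std_normal_distribution)"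
  interpret Q: prob_space Q
    unfolding Q_def by (intro prob_space_PiM real_distribution.axioms real_dist_normal_dist)
  define I where "I = {b\<in>Basis. b \<bullet> w \<noteq> 0}"
  have I: "finite I" "I \<noteq> {}" "I \<subseteq> Basis"
    using \<open>w \<noteq> 0\<close> euclidean_all_zero_iff[of w] by (auto simp: I_def inner_commute)
  have [measurable_cong]: "sets std_normal_distribution = sets borel"
    by simp
  have "distributed Q lborel (\<lambda>x. x b) std_normal_density" if "b \<in> Basis" for b
    using distr_PiM_component[of Basis "\<lambda>_. std_normal_distribution" b] that
      real_distribution.axioms[OF real_dist_normal_dist]
    by (auto simp: distributed_def Q_def cong: distr_cong)
  then have scaled: "distributed Q lborel (\<lambda>x. (b \<bullet> w) * x b) (normal_density 0 \<bar>b \<bullet> w\<bar>)"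
    if "b \<in> I" for b
    using Q.normal_density_affine[of "\<lambda>x. x b" 0 1 "b \<bullet> w" 0] that by (auto simp: I_def)
  have "Q.indep_vars (\<lambda>_. std_normal_distribution) (\<lambda>b x. x b) Basis"
    unfolding Q_def
    by (intro indep_vars_PiM_coordinates real_distribution.axioms real_dist_normal_dist) simp
  then have "Q.indep_vars (\<lambda>_. borel) (\<lambda>b x. (b \<bullet> w) * x b) I"
    by (rule Q.indep_vars_compose2[OF Q.indep_vars_subset[OF _ I(3)]]) simp
  then have "distributed Q lborel (\<lambda>x. \<Sum>b\<in>I. (b \<bullet> w) * x b)
      (normal_density 0 (sqrt (\<Sum>b\<in>I. \<bar>b \<bullet> w\<bar>\<^sup>2)))"
    using Q.sum_indep_normal[OF I(1,2), of "\<lambda>b x. (b \<bullet> w) * x b" "\<lambda>b. \<bar>b \<bullet> w\<bar>" "\<lambda>_. 0"]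
      scaled by (simp add: I_def)
  moreover have "sqrt (\<Sum>b\<in>I. \<bar>b \<bullet> w\<bar>\<^sup>2) = norm w"
    unfolding norm_eq_sqrt_inner euclidean_inner[of w w] I_def
    by (auto intro!: arg_cong[where f=sqrt] sum.mono_neutral_left simp: power2_eq_square inner_commute)
  moreover have "(\<Sum>b\<in>Basis. x b *\<^sub>R b) \<bullet> w = (\<Sum>b\<in>I. (b \<bullet> w) * x b)" for x :: "'a \<Rightarrow> real"
    unfolding inner_sum_left I_def
    by (auto intro!: sum.mono_neutral_right simp: mult.commute)
  moreover have "(\<lambda>x. \<Sum>b\<in>Basis. x b *\<^sub>R b) \<in> borel_measurable Q"
    unfolding Q_def by measurable
  ultimately show ?thesis
    unfolding std_normal_vec_eq_distr_PiM Q_def[symmetric] distributed_def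
    by (subst distr_distr) (auto simp: comp_def)
qed

lemma
  fixes w :: "'a::euclidean_space" and h :: "real \<Rightarrow> real"
  assumes "w \<noteq> 0" and [measurable]: "h \<in> borel_measurable borel"
  shows integrable_std_normal_vec_inner_iff: "integrable std_normal_vec (\<lambda>n. h (n \<bullet> w)) \<longleftrightarrow>
      integrable lborel (\<lambda>x. normal_density 0 (norm w) x * h x)"
    and integral_std_normal_vec_inner: "integral\<^sup>L std_normal_vec (\<lambda>n. h (n \<bullet> w)) =
      integral\<^sup>L lborel (\<lambda>x. normal_density 0 (norm w) x * h x)"
  using distributed_integrable[OF distributed_inner_std_normal_vec[OF \<open>w \<noteq> 0\<close>], of h]
    distributed_integral[OF distributed_inner_std_normal_vec[OF \<open>w \<noteq> 0\<close>], of h]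
  by auto

lemma has_bochner_integral_std_normal_vec_abs_inner:
  "has_bochner_integral std_normal_vec (\<lambda>n. \<bar>n \<bullet> w\<bar>) (norm w * sqrt (2 / pi))"
proof (cases "w = 0")
  case False
  then have "has_bochner_integral lborel (\<lambda>x. normal_density 0 (norm w) x * \<bar>x\<bar>) (norm w * sqrt (2 / pi))"
    using normal_moment_abs_odd[of "norm w" 0 0] by simp
  then show ?thesis
    using integrable_std_normal_vec_inner_iff[OF False, of abs]
      integral_std_normal_vec_inner[OF False, of abs]
    by (simp add: has_bochner_integral_iff)
qed (simp add: has_bochner_integral_zero)

lemma has_bochner_integral_std_normal_vec_inner:
  "has_bochner_integral std_normal_vec (\<lambda>n. n \<bullet> w) 0"
proof (cases "w = 0")
  case False
  then show ?thesis
    using integrable_std_normal_vec_inner_iff[OF False, of "\<lambda>x. x"]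
      integral_std_normal_vec_inner[OF False, of "\<lambda>x. x"]
      normal_moment_nz_1[of "norm w" 0]
    by (simp add: has_bochner_integral_iff)
qed (simp add: has_bochner_integral_zero)

lemma integrable_std_normal_vec_inner_power:
  "integrable std_normal_vec (\<lambda>n. (n \<bullet> w) ^ k)"
proof (cases "w = 0")
  case True
  interpret prob_space "std_normal_vec :: 'a measure"
    by (rule prob_space_std_normal_vec)
  show ?thesis using True by simp
next
  case False
  then show ?thesis
    using integrable_std_normal_vec_inner_iff[OF False, of "\<lambda>x. x ^ k"]
      integrable_normal_moment[of "norm w" 0 k]
    by simp
qed

lemma AE_std_normal_vec_inner_nonzero:
  assumes "w \<noteq> 0"
  shows "AE n in std_normal_vec. n \<bullet> w \<noteq> 0"
proof -
  have "emeasure std_normal_vec ((\<lambda>n. n \<bullet> w) -` {0} \<inter> space std_normal_vec)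
      = (\<integral>\<^sup>+x. ennreal (normal_density 0 (norm w) x) * indicator {0} x \<partial>lborel)"
    by (rule distributed_emeasure[OF distributed_inner_std_normal_vec[OF assms]]) simp
  also have "\<dots> = 0"
    using AE_lborel_singleton[of 0] by (subst nn_integral_0_iff_AE) (auto elim!: eventually_mono)
  finally show ?thesis
    by (subst AE_iff_null) (auto simp: vimage_def Int_def)
qed

lemma measure_std_normal_vec_halfspace:
  assumes "w \<noteq> 0"
  shows "measure std_normal_vec {n. 0 \<le> n \<bullet> w} = 1 / 2"
proof -
  interpret prob_space "std_normal_vec :: 'a measure"
    by (rule prob_space_std_normal_vec)
  have "measure std_normal_vec {n. 0 \<le> n \<bullet> u} = measure (density lborel (normal_density 0 (norm w))) {0..}"
    if "norm u = norm w" "u \<noteq> 0" for u :: 'a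
  proof -
    have "measure std_normal_vec {n. 0 \<le> n \<bullet> u} = measure (distr std_normal_vec lborel (\<lambda>n. n \<bullet> u)) {0..}"
      by (subst measure_distr) (auto simp: vimage_def)
    then show ?thesis
      using distributed_inner_std_normal_vec[OF \<open>u \<noteq> 0\<close>] that(1) by (simp add: distributed_def)
  qed
  from this[of w] this[of "- w"] assms
  have "measure std_normal_vec {n. 0 \<le> n \<bullet> w} = measure std_normal_vec {n. n \<bullet> w \<le> 0}"
    by simp
  also have "\<dots> = 1 - measure std_normal_vec {n. 0 < n \<bullet> w}"
    using prob_compl[of "{n. 0 < n \<bullet> w}"] by (simp add: set_diff_eq not_less)
  also have "measure std_normal_vec {n. 0 < n \<bullet> w} = measure std_normal_vec {n. 0 \<le> n \<bullet> w}"
    using AE_std_normal_vec_inner_nonzero[OF assms]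
    by (intro finite_measure_eq_AE) (auto elim!: eventually_mono)
  finally show ?thesis
    by simp
qed

lemma tendsto_norm_add_scaleR_diff_quotient:
  fixes v c :: "'a::real_inner"
  assumes "v \<noteq> 0"
  shows "((\<lambda>t. (norm (v + t *\<^sub>R c) - norm v) / t) \<longlongrightarrow> (v \<bullet> c) / norm v) (at 0)"
proof -
  have "((\<lambda>t. v + t *\<^sub>R c) has_derivative (\<lambda>t. t *\<^sub>R c)) (at 0)"
    by (auto intro!: derivative_eq_intros)
  from has_derivative_compose[OF this has_derivative_norm[of "v + 0 *\<^sub>R c"]]
  have "((\<lambda>t. norm (v + t *\<^sub>R c)) has_real_derivative (v \<bullet> c) / norm v) (at 0)"
    unfolding has_field_derivative_def
    by (rule has_derivative_eq_rhs) (use assms in \<open>auto simp: fun_eq_iff sgn_div_norm inner_commute field_simps\<close>)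
  then show ?thesis
    by (auto dest: DERIV_D)
qed

lemma abs_add_eq_abs_add_sgn_mult:
  fixes a b :: real
  assumes "\<bar>b\<bar> < \<bar>a\<bar>"
  shows "\<bar>a + b\<bar> = \<bar>a\<bar> + sgn a * b"
  using assms by (cases "0 < a") (auto simp: sgn_if)

lemma tendsto_integral_std_normal_vec_abs_inner_diff_quotient:
  fixes v c :: "'a::euclidean_space"
  assumes "v \<noteq> 0" and t: "t \<longlonglongrightarrow> 0" and t_pos: "\<And>k. 0 < t k"
  shows "(\<lambda>k. integral\<^sup>L std_normal_vec (\<lambda>n. (\<bar>n \<bullet> (v + t k *\<^sub>R c)\<bar> - \<bar>n \<bullet> v\<bar>) / t k))
    \<longlonglongrightarrow> integral\<^sup>L std_normal_vec (\<lambda>n. (n \<bullet> c) * sgn (n \<bullet> v))"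
proof (rule integral_dominated_convergence[where w="\<lambda>n. \<bar>n \<bullet> c\<bar>"])
  show "integrable std_normal_vec (\<lambda>n. \<bar>n \<bullet> c\<bar>)"
    using has_bochner_integral_std_normal_vec_abs_inner[of c] by (simp add: has_bochner_integral_iff)
  show "AE n in std_normal_vec. norm ((\<bar>n \<bullet> (v + t k *\<^sub>R c)\<bar> - \<bar>n \<bullet> v\<bar>) / t k) \<le> \<bar>n \<bullet> c\<bar>" for k
    using t_pos[of k] abs_triangle_ineq3[of "n \<bullet> v + t k * (n \<bullet> c)" "n \<bullet> v" for n]
    by (intro AE_I2) (simp add: inner_add_right abs_mult divide_le_eq mult.commute)
  show "AE n in std_normal_vec.
      (\<lambda>k. (\<bar>n \<bullet> (v + t k *\<^sub>R c)\<bar> - \<bar>n \<bullet> v\<bar>) / t k) \<longlonglongrightarrow> (n \<bullet> c) * sgn (n \<bullet> v)"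
    using AE_std_normal_vec_inner_nonzero[OF \<open>v \<noteq> 0\<close>]
  proof eventually_elim
    case (elim n)
    have "(\<lambda>k. t k * \<bar>n \<bullet> c\<bar>) \<longlonglongrightarrow> 0 * \<bar>n \<bullet> c\<bar>"
      by (intro tendsto_mult t tendsto_const)
    then have "eventually (\<lambda>k. t k * \<bar>n \<bullet> c\<bar> < \<bar>n \<bullet> v\<bar>) sequentially"
      using elim by (intro order_tendstoD) auto
    then have "eventually (\<lambda>k. (\<bar>n \<bullet> (v + t k *\<^sub>R c)\<bar> - \<bar>n \<bullet> v\<bar>) / t k = (n \<bullet> c) * sgn (n \<bullet> v))
        sequentially"
      by eventually_elim
        (simp add: inner_add_right abs_add_eq_abs_add_sgn_mult abs_mult abs_of_pos[OF t_pos]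
          less_imp_neq[OF t_pos, symmetric])
    then show ?case
      by (rule tendsto_eventually)
  qed
qed simp_all

lemma integral_std_normal_vec_inner_sgn:
  fixes v c :: "'a::euclidean_space"
  assumes "v \<noteq> 0"
  shows "integral\<^sup>L std_normal_vec (\<lambda>n. (n \<bullet> c) * sgn (n \<bullet> v)) = sqrt (2 / pi) * (v \<bullet> c) / norm v"
proof -
  \<comment> \<open>differentiate E|n . w| = sqrt (2/pi) norm w at w = v in direction c, under the integral\<close>
  define t where "t k = inverse (real (Suc k))" for k
  have t_pos: "0 < t k" for k
    by (simp add: t_def)
  have t: "t \<longlonglongrightarrow> 0"
    unfolding t_def by (rule LIMSEQ_inverse_real_of_nat)
  then have t_at_0: "filterlim t (at 0) sequentially"
    using t_pos by (auto simp: filterlim_at less_imp_neq[symmetric])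
  have "has_bochner_integral std_normal_vec (\<lambda>n. (\<bar>n \<bullet> (v + t k *\<^sub>R c)\<bar> - \<bar>n \<bullet> v\<bar>) / t k)
      (sqrt (2 / pi) * ((norm (v + t k *\<^sub>R c) - norm v) / t k))" for k
    using has_bochner_integral_divide_zero[OF has_bochner_integral_diff[OF
          has_bochner_integral_std_normal_vec_abs_inner[of "v + t k *\<^sub>R c"]
          has_bochner_integral_std_normal_vec_abs_inner[of v]], of "t k"]
    by (simp add: algebra_simps)
  then have "integral\<^sup>L std_normal_vec (\<lambda>n. (\<bar>n \<bullet> (v + t k *\<^sub>R c)\<bar> - \<bar>n \<bullet> v\<bar>) / t k) =
      sqrt (2 / pi) * ((norm (v + t k *\<^sub>R c) - norm v) / t k)" for k
    by (rule has_bochner_integral_integral_eq)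
  from tendsto_integral_std_normal_vec_abs_inner_diff_quotient[OF assms t t_pos, of c, unfolded this]
  have "(\<lambda>k. sqrt (2 / pi) * ((norm (v + t k *\<^sub>R c) - norm v) / t k))
      \<longlonglongrightarrow> integral\<^sup>L std_normal_vec (\<lambda>n. (n \<bullet> c) * sgn (n \<bullet> v))" .
  moreover have "(\<lambda>k. sqrt (2 / pi) * ((norm (v + t k *\<^sub>R c) - norm v) / t k))
      \<longlonglongrightarrow> sqrt (2 / pi) * ((v \<bullet> c) / norm v)"
    by (intro tendsto_mult tendsto_const filterlim_compose[OF tendsto_norm_add_scaleR_diff_quotient[OF assms] t_at_0])
  ultimately show ?thesis
    using LIMSEQ_unique by force
qed

lemma integral_std_normal_vec_halfspace_inner:
  fixes w c :: "'a::euclidean_space"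
  assumes "w \<noteq> 0"
  shows "integral\<^sup>L std_normal_vec (\<lambda>n. indicator {n. 0 \<le> n \<bullet> w} n * (n \<bullet> c)) = (w \<bullet> c) / (sqrt (2 * pi) * norm w)"
proof -
  have int_sgn: "integrable std_normal_vec (\<lambda>n. (n \<bullet> c) * sgn (n \<bullet> w))"
  proof (rule Bochner_Integration.integrable_bound)
    show "integrable std_normal_vec (\<lambda>n. \<bar>n \<bullet> c\<bar>)"
      using has_bochner_integral_std_normal_vec_abs_inner[of c] by (simp add: has_bochner_integral_iff)
    show "AE n in std_normal_vec. norm ((n \<bullet> c) * sgn (n \<bullet> w)) \<le> norm \<bar>n \<bullet> c\<bar>"
      by (intro AE_I2) (simp add: abs_mult abs_sgn_eq)
  qed simp
  have "integral\<^sup>L std_normal_vec (\<lambda>n. indicator {n. 0 \<le> n \<bullet> w} n * (n \<bullet> c))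
      = integral\<^sup>L std_normal_vec (\<lambda>n. ((n \<bullet> c) * sgn (n \<bullet> w) + n \<bullet> c) / 2)"
    using AE_std_normal_vec_inner_nonzero[OF assms]
  proof (intro integral_cong_AE)
    show "AE n in std_normal_vec. indicator {n. 0 \<le> n \<bullet> w} n * (n \<bullet> c) = ((n \<bullet> c) * sgn (n \<bullet> w) + n \<bullet> c) / 2"
      using AE_std_normal_vec_inner_nonzero[OF assms]
      by eventually_elim (auto simp: indicator_def sgn_if)
  qed simp_all
  also have "\<dots> = sqrt (2 / pi) * (w \<bullet> c) / norm w / 2"
    using int_sgn has_bochner_integral_std_normal_vec_inner[of c] integral_std_normal_vec_inner_sgn[OF assms]
    by (simp add: has_bochner_integral_iff)
  also have "\<dots> = (w \<bullet> c) / (sqrt (2 * pi) * norm w)"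
    using assms real_sqrt_mult_self[of 2] by (simp add: real_sqrt_divide real_sqrt_mult field_simps)
  finally show ?thesis .
qed

lemma std_normal_vec_negative_halfspace:
  fixes w c :: "'a::euclidean_space"
  assumes "w \<noteq> 0"
  shows "measure std_normal_vec {n. n \<bullet> w < 0} = 1 / 2"
    and "integral\<^sup>L std_normal_vec (\<lambda>n. indicator {n. n \<bullet> w < 0} n * (n \<bullet> c)) =
      - ((w \<bullet> c) / (sqrt (2 * pi) * norm w))"
proof -
  interpret prob_space "std_normal_vec :: 'a measure"
    by (rule prob_space_std_normal_vec)
  have compl: "{n. n \<bullet> w < 0} = space std_normal_vec - {n. 0 \<le> n \<bullet> w}"
    by auto
  show "measure std_normal_vec {n. n \<bullet> w < 0} = 1 / 2"
    unfolding compl using measure_std_normal_vec_halfspace[OF assms] by (subst prob_compl) simp_all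
  have "indicator {n. n \<bullet> w < 0} n * (n \<bullet> c) = n \<bullet> c - indicator {n. 0 \<le> n \<bullet> w} n * (n \<bullet> c)" for n
    by (simp add: indicator_def)
  moreover have "integrable std_normal_vec (\<lambda>n. indicator {n. 0 \<le> n \<bullet> w} n * (n \<bullet> c))"
    using integrable_mult_indicator[of "{n. 0 \<le> n \<bullet> w}" std_normal_vec "\<lambda>n. n \<bullet> c"]
      has_bochner_integral_std_normal_vec_inner[of c]
    by (simp add: has_bochner_integral_iff)
  ultimately show "integral\<^sup>L std_normal_vec (\<lambda>n. indicator {n. n \<bullet> w < 0} n * (n \<bullet> c)) =
      - ((w \<bullet> c) / (sqrt (2 * pi) * norm w))"
    using has_bochner_integral_std_normal_vec_inner[of c]
      integral_std_normal_vec_halfspace_inner[OF assms, of c]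
    by (simp add: has_bochner_integral_iff)
qed

section \<open>Hard assignment\<close>

definition hard_region :: "'a::real_inner \<Rightarrow> 'a \<Rightarrow> nat \<Rightarrow> 'a set" where
  "hard_region x0 x1 l = {n. hard_assign x0 x1 n = l}"

lemma hard_region_0: "hard_region x0 x1 0 = {n. 0 \<le> n \<bullet> (x0 - x1)}"
  by (auto simp: hard_region_def hard_assign_def inner_diff_right)

lemma hard_region_1: "hard_region x0 x1 1 = {n. n \<bullet> (x0 - x1) < 0}"
  by (auto simp: hard_region_def hard_assign_def inner_diff_right)

lemma sets_hard_region [measurable]:
  "hard_region x0 x1 l \<in> sets (borel :: 'a::euclidean_space measure)"
  unfolding hard_region_def hard_assign_def by measurable

lemma hard_estimate_eq_ratio_of_averages:
  "hard_estimate x0 x1 ns m l =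
     inverse ((\<Sum>i<m. indicator (hard_region x0 x1 l) (ns i)) / real m) *\<^sub>R
       ((\<Sum>i<m. indicator (hard_region x0 x1 l) (ns i) *\<^sub>R ns i) /\<^sub>R real m)"
proof -
  have cluster: "hard_cluster x0 x1 ns m l = {i\<in>{..<m}. ns i \<in> hard_region x0 x1 l}"
    by (simp add: hard_cluster_def hard_region_def)
  have "real (card (hard_cluster x0 x1 ns m l)) = (\<Sum>i<m. indicator (hard_region x0 x1 l) (ns i))"
    unfolding cluster indicator_def of_bool_def by (subst sum.inter_filter[symmetric]) simp_all
  moreover have "(\<Sum>i\<in>hard_cluster x0 x1 ns m l. ns i) = (\<Sum>i<m. indicator (hard_region x0 x1 l) (ns i) *\<^sub>R ns i)"
    unfolding cluster by (subst sum.inter_filter) (auto simp: indicator_def intro: sum.cong)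
  ultimately show ?thesis
    by (cases "m = 0") (simp_all add: hard_estimate_def divide_inverse inverse_mult_distrib)
qed

lemma tendsto_hard_estimate:
  fixes ns :: "nat \<Rightarrow> 'a::euclidean_space"
  assumes "(\<lambda>m. (\<Sum>i<m. indicator (hard_region x0 x1 l) (ns i)) / real m) \<longlonglongrightarrow> p" and "p \<noteq> 0"
    and "\<And>b. b \<in> Basis \<Longrightarrow>
      (\<lambda>m. (\<Sum>i<m. indicator (hard_region x0 x1 l) (ns i) * (ns i \<bullet> b)) / real m) \<longlonglongrightarrow> \<mu> \<bullet> b"
  shows "(\<lambda>m. hard_estimate x0 x1 ns m l) \<longlonglongrightarrow> inverse p *\<^sub>R \<mu>"
proof -
  have "(\<lambda>m. (\<Sum>i<m. indicator (hard_region x0 x1 l) (ns i) *\<^sub>R ns i) /\<^sub>R real m) \<longlonglongrightarrow> \<mu>"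
  proof (rule tendsto_componentwise_iff[THEN iffD2, rule_format])
    fix b :: 'a assume "b \<in> Basis"
    have "((\<Sum>i<m. indicator (hard_region x0 x1 l) (ns i) *\<^sub>R ns i) /\<^sub>R real m) \<bullet> b =
        (\<Sum>i<m. indicator (hard_region x0 x1 l) (ns i) * (ns i \<bullet> b)) / real m" for m
      by (simp add: inner_sum_left divide_inverse)
    then show "(\<lambda>m. ((\<Sum>i<m. indicator (hard_region x0 x1 l) (ns i) *\<^sub>R ns i) /\<^sub>R real m) \<bullet> b) \<longlonglongrightarrow> \<mu> \<bullet> b"
      using assms(3)[OF \<open>b \<in> Basis\<close>] by simp
  qed
  then show ?thesis
    unfolding hard_estimate_eq_ratio_of_averages using assms(1,2)
    by (intro tendsto_scaleR tendsto_inverse)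
qed

lemma (in prob_space) AE_tendsto_hard_estimate:
  fixes N :: "nat \<Rightarrow> 'a \<Rightarrow> 'b::euclidean_space"
  assumes indep: "indep_vars (\<lambda>_. borel) N UNIV" and law: "\<And>i. distr M borel (N i) = D"
    and fourth_moments: "\<And>b. b \<in> Basis \<Longrightarrow> integrable D (\<lambda>n. (n \<bullet> b) ^ 4)"
    and mass: "measure D (hard_region x0 x1 l) = p" "p \<noteq> 0"
    and first_moments: "\<And>b. b \<in> Basis \<Longrightarrow>
      integral\<^sup>L D (\<lambda>n. indicator (hard_region x0 x1 l) n * (n \<bullet> b)) = \<mu> \<bullet> b"
  shows "AE \<omega> in M. (\<lambda>m. hard_estimate x0 x1 (\<lambda>i. N i \<omega>) m l) \<longlonglongrightarrow> inverse p *\<^sub>R \<mu>"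
proof -
  interpret D: prob_space D
    using prob_space_distr[of "N 0" borel] law[of 0] indep by (auto simp: indep_vars_def)
  have sets_D [measurable_cong]: "sets D = sets borel"
    using sets_distr[of M borel "N 0"] law[of 0] by simp
  then have space_D: "space D = UNIV"
    using sets_eq_imp_space_eq[of D borel] by simp
  let ?A = "hard_region x0 x1 l"
  have "integrable D (indicator ?A :: 'b \<Rightarrow> real)"
    by (rule integrable_real_indicator) (simp_all add: sets_D less_top[symmetric])
  moreover have "(\<lambda>n. indicator ?A n ^ 4) = (indicator ?A :: 'b \<Rightarrow> real)"
    by (simp add: fun_eq_iff indicator_def)
  ultimately have "integrable D (\<lambda>n. indicator ?A n ^ 4 :: real)"
    by simp
  then have "AE \<omega> in M. (\<lambda>m. (\<Sum>i<m. indicator ?A (N i \<omega>)) / real m) \<longlonglongrightarrow> p"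
    using strong_law_of_large_numbers_fourth_moment[OF indep law, of "indicator ?A"] mass(1)
    by (simp add: space_D)
  moreover have "AE \<omega> in M. \<forall>b\<in>Basis.
      (\<lambda>m. (\<Sum>i<m. indicator ?A (N i \<omega>) * (N i \<omega> \<bullet> b)) / real m) \<longlonglongrightarrow> \<mu> \<bullet> b"
  proof (intro eventually_ball_finite ballI finite_Basis)
    fix b :: 'b assume "b \<in> Basis"
    have "(indicator ?A n * (n \<bullet> b)) ^ 4 = indicator ?A n * (n \<bullet> b) ^ 4" for n :: 'b
      by (cases "n \<in> ?A") auto
    then have "integrable D (\<lambda>n. (indicator ?A n * (n \<bullet> b)) ^ 4)"
      using integrable_mult_indicator[OF _ fourth_moments[OF \<open>b \<in> Basis\<close>], of ?A] sets_D
      by simp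
    then show "AE \<omega> in M. (\<lambda>m. (\<Sum>i<m. indicator ?A (N i \<omega>) * (N i \<omega> \<bullet> b)) / real m) \<longlonglongrightarrow> \<mu> \<bullet> b"
      using strong_law_of_large_numbers_fourth_moment[OF indep law, of "\<lambda>n. indicator ?A n * (n \<bullet> b)"]
        first_moments[OF \<open>b \<in> Basis\<close>] by simp
  qed
  ultimately show ?thesis
    by eventually_elim (intro tendsto_hard_estimate mass(2); blast)
qed

lemma correlation_scale_eq:
  fixes x0 x1 :: "'a::real_inner"
  assumes "norm x0 = norm x1" and "x0 \<noteq> x1"
  shows "sqrt (1 / (pi * (1 - inner x0 x1 / (norm x0)\<^sup>2) * (norm x0)\<^sup>2)) =
    2 * (1 / (sqrt (2 * pi) * norm (x0 - x1)))"
proof -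
  have "x0 \<noteq> 0"
    using assms by auto
  have "inner x1 x1 = inner x0 x0"
    using assms(1) by (metis power2_norm_eq_inner)
  then have "(norm (x0 - x1))\<^sup>2 = 2 * ((norm x0)\<^sup>2 - inner x0 x1)"
    by (simp add: power2_norm_eq_inner inner_diff_left inner_diff_right inner_commute)
  moreover have "(1 - inner x0 x1 / (norm x0)\<^sup>2) * (norm x0)\<^sup>2 = (norm x0)\<^sup>2 - inner x0 x1"
    using \<open>x0 \<noteq> 0\<close> by (simp add: field_simps)
  ultimately have variance:
    "pi * (1 - inner x0 x1 / (norm x0)\<^sup>2) * (norm x0)\<^sup>2 = pi * (norm (x0 - x1))\<^sup>2 / 2"
    by (simp add: mult.assoc)
  show ?thesis
    unfolding variance using real_sqrt_mult_self[of 2] assms(2)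
    by (simp add: real_sqrt_divide real_sqrt_mult field_simps)
qed

theorem theorem2:
  fixes P :: "'w measure" and N :: "nat \<Rightarrow> 'w \<Rightarrow> 'a::euclidean_space" and x0 x1 :: 'a
  assumes "prob_space P"
    and "prob_space.indep_vars P (\<lambda>_. borel) N UNIV"
    and "\<And>i. distr P borel (N i) = std_normal_vec"
    and "x0 \<noteq> x1"
    and "norm x0 = norm x1"
    and "\<bar>inner x0 x1 / (norm x0)\<^sup>2\<bar> < 1"
  shows "AE \<omega> in P.
    ((\<lambda>m. hard_estimate x0 x1 (\<lambda>i. N i \<omega>) m 0) \<longlonglongrightarrow>
       sqrt (1 / (pi * (1 - inner x0 x1 / (norm x0)\<^sup>2) * (norm x0)\<^sup>2)) *\<^sub>R (x0 - x1)) \<and>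
    ((\<lambda>m. hard_estimate x0 x1 (\<lambda>i. N i \<omega>) m 1) \<longlonglongrightarrow>
       sqrt (1 / (pi * (1 - inner x0 x1 / (norm x0)\<^sup>2) * (norm x0)\<^sup>2)) *\<^sub>R (x1 - x0))"
proof -
  interpret prob_space P by fact
  define v where "v = x0 - x1"
  have "v \<noteq> 0"
    using assms(4) by (simp add: v_def)
  define \<mu> where "\<mu> = (1 / (sqrt (2 * pi) * norm v)) *\<^sub>R v"
  have scale:
      "sqrt (1 / (pi * (1 - inner x0 x1 / (norm x0)\<^sup>2) * (norm x0)\<^sup>2)) *\<^sub>R (x0 - x1) = inverse (1 / 2) *\<^sub>R \<mu>"
      "sqrt (1 / (pi * (1 - inner x0 x1 / (norm x0)\<^sup>2) * (norm x0)\<^sup>2)) *\<^sub>R (x1 - x0) = inverse (1 / 2) *\<^sub>R - \<mu>"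
    by (simp_all add: correlation_scale_eq[OF assms(5,4)] \<mu>_def v_def scaleR_diff_right)
  note AE_limit = AE_tendsto_hard_estimate[OF assms(2,3) integrable_std_normal_vec_inner_power]
  have "AE \<omega> in P. (\<lambda>m. hard_estimate x0 x1 (\<lambda>i. N i \<omega>) m 0) \<longlonglongrightarrow> inverse (1 / 2) *\<^sub>R \<mu>"
    using measure_std_normal_vec_halfspace[OF \<open>v \<noteq> 0\<close>] integral_std_normal_vec_halfspace_inner[OF \<open>v \<noteq> 0\<close>]
    by (intro AE_limit, unfold hard_region_0) (simp_all add: \<mu>_def v_def)
  moreover have "AE \<omega> in P. (\<lambda>m. hard_estimate x0 x1 (\<lambda>i. N i \<omega>) m 1) \<longlonglongrightarrow> inverse (1 / 2) *\<^sub>R - \<mu>"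
    using std_normal_vec_negative_halfspace[OF \<open>v \<noteq> 0\<close>]
    by (intro AE_limit, unfold hard_region_1) (simp_all add: \<mu>_def v_def)
  ultimately show ?thesis
    by eventually_elim (simp only: scale)
qed

end
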